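(* Let $G$ be an ample Hausdorff groupoid, let $R$ be a commutative unital ring with the discrete topology, let $T \le R^\times$, and let $\sigma\colon G^{(2)} \to T$ be a continuous $2$-cocycle. There is an $R$-algebra isomorphism $\Psi\colon A_R(G; G \times_\sigma T) \to A_R(G,\sigma^{-1})$ with $\Psi(f)(\gamma) = f(\gamma,1)$ for all $f \in A_R(G; G\times_\sigma T)$ and $\gamma \in G$, where $\sigma^{-1}(\alpha,\beta) := \sigma(\alpha,\beta)^{-1}$. If $R$ has a $T$-inverse involution, then $\Psi$ is a $*$-isomorphism.
   Context: Groupoids are locally compact Hausdorff topological groupoids; $G$ is ample if it has a basis of compact open bisections; $T$ has the discrete topology. A continuous $2$-cocycle $\omega\colon G^{(2)}\to T$ is continuous with $\omega(\alpha,\beta)\omega(\alpha\beta,\gamma) = \omega(\alpha,\beta\gamma)\omega(\beta,\gamma)$ and $\omega(r(\gamma),\gamma)=1=\omega(\gamma,s(\gamma))$. $G\times_\sigma T$ is $G\times T$ with product topology, multiplication $(\alpha,z)(\beta,w) = (\alpha\beta,\sigma(\alpha,\beta)zw)$, inverse $(\alpha,z)^{-1} = (\alpha^{-1},\sigma(\alpha,\alpha^{-1})^{-1}z^{-1})$, with $q(\gamma,z)=\gamma$; $T$ acts on it by $z\cdot(\alpha,w) = (\alpha,zw)$. $A_R(G;G\times_\sigma T)$ is the set of continuous $f\colon G\times_\sigma T\to R$ with $f(z\cdot\varepsilon) = zf(\varepsilon)$ and $\overline{q(\{f\neq0\})}$ compact, with pointwise module operations, multiplication $(f*g)(\varepsilon)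 = \sum_{\gamma\in G^{s(q(\varepsilon))}} f(\varepsilon S(\gamma))g(S(\gamma)^{-1})$ where $S(\gamma) = (\gamma,1)$, and (when $R$ has a $T$-inverse involution) involution $f^*(\varepsilon) = \overline{f(\varepsilon^{-1})}$. $A_R(G,\omega)$ is the $R$-module of locally constant compactly supported $f\colon G\to R$ with multiplication $(f*_\omega g)(\gamma) = \sum_{\alpha\beta=\gamma}\omega(\alpha,\beta)f(\alpha)g(\beta)$ and involution $f^*(\gamma) = \omega(\gamma,\gamma^{-1})^{-1}\overline{f(\gamma^{-1})}$. A $T$-inverse involution on $R$ is a ring involution $r\mapsto\overline r$ with $\overline z = z^{-1}$ for $z\in T$. *)

theory Defs
  imports "HOL-Analysis.Analysis"
begin

text \<open>A groupoid is represented by its structure maps on a type 'g whose elements are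
  the arrows of the groupoid; the topology of G is the type-class topology of 'g.\<close>

record 'g groupoid =
  rng :: "'g \<Rightarrow> 'g"
  src :: "'g \<Rightarrow> 'g"
  gmul :: "'g \<Rightarrow> 'g \<Rightarrow> 'g"
  ginv :: "'g \<Rightarrow> 'g"

definition composable :: "'g groupoid \<Rightarrow> ('g \<times> 'g) set"
  where "composable G = {(a, b). src G a = rng G b}"

definition units :: "'g groupoid \<Rightarrow> 'g set"
  where "units G = range (rng G)"

definition groupoid_axioms :: "'g groupoid \<Rightarrow> bool" where
  "groupoid_axioms G \<longleftrightarrow>
     (\<forall>a b. src G a = rng G b \<longrightarrow>
        rng G (gmul G a b) = rng G a \<and> src G (gmul G a b) = src G b) \<and>
     (\<forall>a b c. src G a = rng G b \<and> src G b = rng G c \<longrightarrow>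
        gmul G (gmul G a b) c = gmul G a (gmul G b c)) \<and>
     (\<forall>a. src G (rng G a) = rng G a \<and> rng G (src G a) = src G a) \<and>
     (\<forall>a. gmul G (rng G a) a = a \<and> gmul G a (src G a) = a) \<and>
     (\<forall>a. src G (ginv G a) = rng G a \<and> rng G (ginv G a) = src G a \<and>
          gmul G a (ginv G a) = rng G a \<and> gmul G (ginv G a) a = src G a)"

definition topological_groupoid :: "('g::topological_space) groupoid \<Rightarrow> bool" where
  "topological_groupoid G \<longleftrightarrow> groupoid_axioms G \<and>
     continuous_on (composable G) (\<lambda>(a, b). gmul G a b) \<and>
     continuous_on UNIV (ginv G)"

definition bisection :: "('g::topological_space) groupoid \<Rightarrow> 'g set \<Rightarrow> bool" where
  "bisection G B \<longleftrightarrow>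
     (\<exists>g. homeomorphism B (rng G ` B) (rng G) g) \<and>
     openin (top_of_set (units G)) (rng G ` B) \<and>
     (\<exists>g. homeomorphism B (src G ` B) (src G) g) \<and>
     openin (top_of_set (units G)) (src G ` B)"

definition ample_hausdorff_groupoid :: "('g::t2_space) groupoid \<Rightarrow> bool" where
  "ample_hausdorff_groupoid G \<longleftrightarrow> topological_groupoid G \<and>
     locally_compact_space (euclidean :: 'g topology) \<and>
     (\<forall>U x. open U \<and> x \<in> U \<longrightarrow>
        (\<exists>B. compact B \<and> open B \<and> bisection G B \<and> x \<in> B \<and> B \<subseteq> U))"

definition uinv :: "'r::comm_ring_1 \<Rightarrow> 'r" where
  "uinv x = (THE y. x * y = 1)"

definition subgroup_of_units :: "('r::comm_ring_1) set \<Rightarrow> bool" where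
  "subgroup_of_units T \<longleftrightarrow> 1 \<in> T \<and> (\<forall>a\<in>T. \<forall>b\<in>T. a * b \<in> T) \<and>
     (\<forall>a\<in>T. \<exists>b\<in>T. a * b = 1)"

text \<open>Continuity into a discrete space (= local constancy) on a subset S.\<close>
definition locally_constant_on :: "('a::topological_space) set \<Rightarrow> ('a \<Rightarrow> 'b) \<Rightarrow> bool" where
  "locally_constant_on S f \<longleftrightarrow>
     (\<forall>x\<in>S. \<exists>U. open U \<and> x \<in> U \<and> (\<forall>y\<in>U \<inter> S. f y = f x))"

definition continuous_2_cocycle ::
  "('g::topological_space) groupoid \<Rightarrow> ('r::comm_ring_1) set \<Rightarrow> ('g \<times> 'g \<Rightarrow> 'r) \<Rightarrow> bool" where
  "continuous_2_cocycle G T \<sigma> \<longleftrightarrow>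
     (\<forall>p\<in>composable G. \<sigma> p \<in> T) \<and>
     locally_constant_on (composable G) \<sigma> \<and>
     (\<forall>a b c. src G a = rng G b \<and> src G b = rng G c \<longrightarrow>
        \<sigma> (a, b) * \<sigma> (gmul G a b, c) = \<sigma> (a, gmul G b c) * \<sigma> (b, c)) \<and>
     (\<forall>g. \<sigma> (rng G g, g) = 1 \<and> \<sigma> (g, src G g) = 1)"

definition finsum :: "('a \<Rightarrow> 'r::comm_ring_1) \<Rightarrow> 'a set \<Rightarrow> 'r" where
  "finsum h S = sum h {x \<in> S. h x \<noteq> 0}"

definition tw_mul :: "'g groupoid \<Rightarrow> ('g \<times> 'g \<Rightarrow> 'r::comm_ring_1) \<Rightarrow> 'g \<times> 'r \<Rightarrow> 'g \<times> 'r \<Rightarrow> 'g \<times> 'r" where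
  "tw_mul G \<sigma> e e' = (gmul G (fst e) (fst e'), \<sigma> (fst e, fst e') * snd e * snd e')"

definition tw_inv :: "'g groupoid \<Rightarrow> ('g \<times> 'g \<Rightarrow> 'r::comm_ring_1) \<Rightarrow> 'g \<times> 'r \<Rightarrow> 'g \<times> 'r" where
  "tw_inv G \<sigma> e = (ginv G (fst e), uinv (\<sigma> (fst e, ginv G (fst e))) * uinv (snd e))"

text \<open>Elements of A_R(G; G \<times>_\<sigma> T) are functions on 'g \<times> 'r that vanish off G \<times> T.\<close>
definition A_twist :: "('g::topological_space) groupoid \<Rightarrow> ('r::comm_ring_1) set \<Rightarrow> ('g \<times> 'r \<Rightarrow> 'r) set" where
  "A_twist G T = {f.
     (\<forall>g z. z \<notin> T \<longrightarrow> f (g, z) = 0) \<and>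
     (\<forall>z\<in>T. locally_constant_on UNIV (\<lambda>g. f (g, z))) \<and>
     (\<forall>z\<in>T. \<forall>g. \<forall>w\<in>T. f (g, z * w) = z * f (g, w)) \<and>
     compact (closure {g. \<exists>z\<in>T. f (g, z) \<noteq> 0})}"

definition conv_twist ::
  "'g groupoid \<Rightarrow> ('r::comm_ring_1) set \<Rightarrow> ('g \<times> 'g \<Rightarrow> 'r) \<Rightarrow> ('g \<times> 'r \<Rightarrow> 'r) \<Rightarrow> ('g \<times> 'r \<Rightarrow> 'r) \<Rightarrow> 'g \<times> 'r \<Rightarrow> 'r" where
  "conv_twist G T \<sigma> f h e = (if snd e \<in> T then
      finsum (\<lambda>c. f (tw_mul G \<sigma> e (c, 1)) * h (tw_inv G \<sigma> (c, 1)))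
             {c. rng G c = src G (fst e)}
    else 0)"

definition star_twist ::
  "'g groupoid \<Rightarrow> ('r::comm_ring_1) set \<Rightarrow> ('g \<times> 'g \<Rightarrow> 'r) \<Rightarrow> ('r \<Rightarrow> 'r) \<Rightarrow> ('g \<times> 'r \<Rightarrow> 'r) \<Rightarrow> 'g \<times> 'r \<Rightarrow> 'r" where
  "star_twist G T \<sigma> bar f e = (if snd e \<in> T then bar (f (tw_inv G \<sigma> e)) else 0)"

definition A_cocycle :: "('g::topological_space) groupoid \<Rightarrow> ('g \<Rightarrow> 'r::comm_ring_1) set" where
  "A_cocycle G = {f. locally_constant_on UNIV f \<and> compact (closure {g. f g \<noteq> 0})}"

definition conv_cocycle ::
  "'g groupoid \<Rightarrow> ('g \<times> 'g \<Rightarrow> 'r::comm_ring_1) \<Rightarrow> ('g \<Rightarrow> 'r) \<Rightarrow> ('g \<Rightarrow> 'r) \<Rightarrow> 'g \<Rightarrow> 'r" where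
  "conv_cocycle G \<omega> f h g =
     finsum (\<lambda>(a, b). \<omega> (a, b) * f a * h b) {(a, b). src G a = rng G b \<and> gmul G a b = g}"

definition star_cocycle ::
  "'g groupoid \<Rightarrow> ('g \<times> 'g \<Rightarrow> 'r::comm_ring_1) \<Rightarrow> ('r \<Rightarrow> 'r) \<Rightarrow> ('g \<Rightarrow> 'r) \<Rightarrow> 'g \<Rightarrow> 'r" where
  "star_cocycle G \<omega> bar f g = uinv (\<omega> (g, ginv G g)) * bar (f (ginv G g))"

definition T_inverse_involution :: "('r::comm_ring_1) set \<Rightarrow> ('r \<Rightarrow> 'r) \<Rightarrow> bool" where
  "T_inverse_involution T bar \<longleftrightarrow>
     (\<forall>a b. bar (a + b) = bar a + bar b) \<and>
     (\<forall>a b. bar (a * b) = bar b * bar a) \<and>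
     bar 1 = 1 \<and>
     (\<forall>a. bar (bar a) = a) \<and>
     (\<forall>z\<in>T. bar z = uinv z)"

end

theory Submission
  imports Defs
begin

text \<open>Every f in A_R(G; G \<times>_\<sigma> T) is T-equivariant, hence determined by its restriction
  f(-, 1) to the section \<gamma> \<mapsto> (\<gamma>, 1); the inverse extends h by (\<gamma>, z) \<mapsto> z h(\<gamma>).
  Substituting \<gamma> \<mapsto> (\<gamma>, 1) into the twisted convolution and reindexing the sum over
  c \<in> G^{s(\<gamma>)} by the factorisations (\<gamma> c, c\<inverse>) of \<gamma> produces the scalar
  \<sigma>(\<gamma>, c) \<sigma>(c, c\<inverse>)\<inverse>, which the cocycle identity for (\<gamma>, c, c\<inverse>) turns into
  \<sigma>(\<gamma> c, c\<inverse>)\<inverse>. The involutions match since the bar of \<sigma>(\<gamma>, \<gamma>\<inverse>)\<inverse> is \<sigma>(\<gamma>, \<gamma>\<inverse>).\<close>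

lemma uinv_eq:
  fixes x y :: "'r::comm_ring_1"
  assumes "x * y = 1"
  shows "uinv x = y"
  unfolding uinv_def
proof (rule the_equality)
  show "x * y = 1" by fact
  fix y' assume "x * y' = 1"
  then have "y' = y' * (x * y)" using assms by simp
  also have "\<dots> = y * (x * y')" by (simp add: algebra_simps)
  finally show "y' = y" using \<open>x * y' = 1\<close> by simp
qed

lemma uinv_one [simp]: "uinv (1::'r::comm_ring_1) = 1"
  by (rule uinv_eq) simp

lemma subgroup_of_units_one: "subgroup_of_units T \<Longrightarrow> 1 \<in> T"
  unfolding subgroup_of_units_def by blast

lemma subgroup_of_units_mult: "subgroup_of_units T \<Longrightarrow> a \<in> T \<Longrightarrow> b \<in> T \<Longrightarrow> a * b \<in> T"
  unfolding subgroup_of_units_def by blast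

lemma subgroup_of_units_uinv:
  fixes T :: "'r::comm_ring_1 set"
  assumes "subgroup_of_units T" "z \<in> T"
  shows right_inverse_uinv: "z * uinv z = 1"
    and uinv_mem: "uinv z \<in> T"
    and uinv_uinv: "uinv (uinv z) = z"
proof -
  obtain y where y: "y \<in> T" "z * y = 1"
    using assms unfolding subgroup_of_units_def by blast
  then have "uinv z = y" by (intro uinv_eq)
  with y show "z * uinv z = 1" "uinv z \<in> T" "uinv (uinv z) = z"
    by (auto intro: uinv_eq simp: mult.commute)
qed

locale groupoid =
  fixes G :: "'g groupoid"
  assumes axioms: "groupoid_axioms G"
begin

lemma
  shows rng_gmul: "src G a = rng G b \<Longrightarrow> rng G (gmul G a b) = rng G a"
    and src_gmul: "src G a = rng G b \<Longrightarrow> src G (gmul G a b) = src G b"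
    and gmul_assoc: "src G a = rng G b \<Longrightarrow> src G b = rng G c \<Longrightarrow>
      gmul G (gmul G a b) c = gmul G a (gmul G b c)"
    and gmul_rng: "gmul G (rng G a) a = a"
    and gmul_src: "gmul G a (src G a) = a"
    and src_ginv [simp]: "src G (ginv G a) = rng G a"
    and rng_ginv [simp]: "rng G (ginv G a) = src G a"
    and gmul_ginv_right: "gmul G a (ginv G a) = rng G a"
    and gmul_ginv_left: "gmul G (ginv G a) a = src G a"
  using axioms unfolding groupoid_axioms_def by blast+

lemma ginv_ginv [simp]: "ginv G (ginv G a) = a"
proof -
  let ?i = "ginv G (ginv G a)"
  have "?i = gmul G ?i (gmul G (ginv G a) a)"
    using gmul_src[of ?i] by (simp add: gmul_ginv_left)
  also have "\<dots> = gmul G (gmul G ?i (ginv G a)) a"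
    by (simp add: gmul_assoc)
  also have "\<dots> = a"
    using gmul_ginv_left[of "ginv G a"] by (simp add: gmul_rng)
  finally show ?thesis .
qed

lemma bij_betw_factorizations:
  "bij_betw (\<lambda>c. (gmul G g c, ginv G c)) {c. rng G c = src G g}
     {(a, b). src G a = rng G b \<and> gmul G a b = g}"
proof (rule bij_betw_byWitness[where f' = "\<lambda>(a, b). ginv G b"])
  have "gmul G a b = g \<Longrightarrow> src G a = rng G b \<Longrightarrow> gmul G g (ginv G b) = a" for a b
    using gmul_assoc[of a b "ginv G b"] gmul_src[of a] by (auto simp: gmul_ginv_right)
  then show "\<forall>p\<in>{(a, b). src G a = rng G b \<and> gmul G a b = g}.
      (\<lambda>c. (gmul G g c, ginv G c)) ((\<lambda>(a, b). ginv G b) p) = p"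
    by auto
  have "rng G c = src G g \<Longrightarrow> gmul G (gmul G g c) (ginv G c) = g" for c
    using gmul_assoc[of g c "ginv G c"] by (simp add: gmul_ginv_right gmul_src)
  then show "(\<lambda>c. (gmul G g c, ginv G c)) ` {c. rng G c = src G g}
      \<subseteq> {(a, b). src G a = rng G b \<and> gmul G a b = g}"
    by (auto simp: src_gmul)
qed (auto simp: rng_gmul src_gmul)

end

locale groupoid_cocycle = groupoid G for G :: "('g::topological_space) groupoid" +
  fixes T :: "'r::comm_ring_1 set"
    and \<sigma> :: "'g \<times> 'g \<Rightarrow> 'r"
  assumes subgroup: "subgroup_of_units T"
    and cocycle_mem: "src G a = rng G b \<Longrightarrow> \<sigma> (a, b) \<in> T"
    and cocycle_identity: "src G a = rng G b \<Longrightarrow> src G b = rng G c \<Longrightarrow>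
      \<sigma> (a, b) * \<sigma> (gmul G a b, c) = \<sigma> (a, gmul G b c) * \<sigma> (b, c)"
    and cocycle_src: "\<sigma> (g, src G g) = 1"

lemma continuous_2_cocycle_imp_groupoid_cocycle:
  assumes "groupoid_axioms G" "subgroup_of_units T" "continuous_2_cocycle G T \<sigma>"
  shows "groupoid_cocycle G T \<sigma>"
  using assms unfolding groupoid_cocycle_def groupoid_cocycle_axioms_def groupoid_def
    continuous_2_cocycle_def composable_def
  by blast

context groupoid_cocycle
begin

lemma cocycle_ginv_mem: "\<sigma> (a, ginv G a) \<in> T"
  by (simp add: cocycle_mem)

lemma uinv_cocycle_gmul_ginv:
  assumes "rng G c = src G g"
  shows "uinv (\<sigma> (gmul G g c, ginv G c)) = \<sigma> (g, c) * uinv (\<sigma> (c, ginv G c))"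
proof (rule uinv_eq)
  have "\<sigma> (g, c) * \<sigma> (gmul G g c, ginv G c) = \<sigma> (c, ginv G c)"
    using cocycle_identity[of g c "ginv G c"] assms
    by (simp add: gmul_ginv_right cocycle_src)
  then show "\<sigma> (gmul G g c, ginv G c) * (\<sigma> (g, c) * uinv (\<sigma> (c, ginv G c))) = 1"
    using right_inverse_uinv[OF subgroup cocycle_ginv_mem]
    by (metis mult.assoc mult.commute)
qed

end

definition untwist :: "('g \<times> 'r::comm_ring_1 \<Rightarrow> 'r) \<Rightarrow> 'g \<Rightarrow> 'r" where
  "untwist f g = f (g, 1)"

definition twist_extend :: "'r::comm_ring_1 set \<Rightarrow> ('g \<Rightarrow> 'r) \<Rightarrow> 'g \<times> 'r \<Rightarrow> 'r" where
  "twist_extend T h e = (if snd e \<in> T then snd e * h (fst e) else 0)"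

lemma A_twist_equivariant:
  assumes "f \<in> A_twist G T" "1 \<in> T" "z \<in> T"
  shows "f (g, z) = z * untwist f g"
proof -
  have "\<forall>z\<in>T. \<forall>g. \<forall>w\<in>T. f (g, z * w) = z * f (g, w)"
    using assms(1) unfolding A_twist_def by blast
  then show ?thesis
    using assms(2,3) unfolding untwist_def by (metis mult_1_right)
qed

lemma untwist_mem_A_cocycle:
  assumes f: "f \<in> A_twist G T" and "1 \<in> T"
  shows "untwist f \<in> A_cocycle G"
proof -
  let ?S = "closure {g. \<exists>z\<in>T. f (g, z) \<noteq> 0}"
  have "locally_constant_on UNIV (untwist f)"
    using f \<open>1 \<in> T\<close> unfolding A_twist_def untwist_def by auto
  moreover have "closure {g. untwist f g \<noteq> 0} \<subseteq> ?S"
    by (rule closure_mono) (use \<open>1 \<in> T\<close> in \<open>auto simp: untwist_def\<close>)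
  then have "compact (closure {g. untwist f g \<noteq> 0})"
    using compact_Int_closed[of ?S "closure {g. untwist f g \<noteq> 0}"] f
    by (simp add: A_twist_def Int_absorb1)
  ultimately show ?thesis unfolding A_cocycle_def by simp
qed

lemma twist_extend_mem_A_twist:
  assumes T: "subgroup_of_units T" and h: "h \<in> A_cocycle G"
  shows "twist_extend T h \<in> A_twist G T"
proof -
  have "{g. \<exists>z\<in>T. twist_extend T h (g, z) \<noteq> 0} = {g. h g \<noteq> 0}"
    using subgroup_of_units_one[OF T] unfolding twist_extend_def by force
  moreover have "\<forall>z\<in>T. locally_constant_on UNIV (\<lambda>g. twist_extend T h (g, z))"
    using h unfolding A_cocycle_def locally_constant_on_def twist_extend_def by simp metis
  moreover have "\<forall>z\<in>T. \<forall>g. \<forall>w\<in>T. twist_extend T h (g, z * w) = z * twist_extend T h (g, w)"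
    using subgroup_of_units_mult[OF T] unfolding twist_extend_def by (simp add: mult.assoc)
  moreover have "\<forall>g z. z \<notin> T \<longrightarrow> twist_extend T h (g, z) = 0"
    unfolding twist_extend_def by simp
  ultimately show ?thesis
    using h unfolding A_twist_def A_cocycle_def by simp
qed

lemma bij_betw_untwist:
  assumes T: "subgroup_of_units T"
  shows "bij_betw untwist (A_twist G T) (A_cocycle G)"
proof (rule bij_betw_byWitness[where f' = "twist_extend T"])
  note one = subgroup_of_units_one[OF T]
  show "\<forall>f\<in>A_twist G T. twist_extend T (untwist f) = f"
  proof (intro ballI ext)
    fix f e assume "f \<in> A_twist G T"
    then show "twist_extend T (untwist f) e = f e"
      using A_twist_equivariant[OF _ one, where z = "snd e" and g = "fst e"]
      by (cases e) (auto simp: twist_extend_def A_twist_def)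
  qed
  show "\<forall>h\<in>A_cocycle G. untwist (twist_extend T h) = h"
    using one by (simp add: fun_eq_iff untwist_def twist_extend_def)
qed (use untwist_mem_A_cocycle[OF _ subgroup_of_units_one[OF T]] twist_extend_mem_A_twist[OF T] in auto)

lemma finsum_reindex_bij_betw:
  assumes "bij_betw \<phi> S S'" "\<And>x. x \<in> S \<Longrightarrow> F x = H (\<phi> x)"
  shows "finsum F S = finsum H S'"
proof -
  have "bij_betw \<phi> {x \<in> S. F x \<noteq> 0} {y \<in> S'. H y \<noteq> 0}"
    by (rule bij_betw_subset[OF assms(1)])
      (use assms bij_betw_imp_surj_on[OF assms(1)] in auto)
  then have "finsum H S' = sum (\<lambda>x. H (\<phi> x)) {x \<in> S. F x \<noteq> 0}"
    unfolding finsum_def by (rule sum.reindex_bij_betw[symmetric])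
  also have "\<dots> = finsum F S"
    unfolding finsum_def by (rule sum.cong) (simp_all add: assms(2))
  finally show ?thesis ..
qed

context groupoid_cocycle
begin

lemma untwist_conv_twist:
  assumes f: "f \<in> A_twist G T" and h: "h \<in> A_twist G T"
  shows "untwist (conv_twist G T \<sigma> f h) = conv_cocycle G (\<lambda>p. uinv (\<sigma> p)) (untwist f) (untwist h)"
proof
  fix g
  note one = subgroup_of_units_one[OF subgroup]
  have summand: "f (tw_mul G \<sigma> (g, 1) (c, 1)) * h (tw_inv G \<sigma> (c, 1))
      = (\<lambda>(a, b). uinv (\<sigma> (a, b)) * untwist f a * untwist h b) (gmul G g c, ginv G c)"
    if c: "rng G c = src G g" for c
  proof -
    have "f (tw_mul G \<sigma> (g, 1) (c, 1)) * h (tw_inv G \<sigma> (c, 1))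
        = f (gmul G g c, \<sigma> (g, c)) * h (ginv G c, uinv (\<sigma> (c, ginv G c)))"
      by (simp add: tw_mul_def tw_inv_def)
    also have "\<dots> = \<sigma> (g, c) * untwist f (gmul G g c) * (uinv (\<sigma> (c, ginv G c)) * untwist h (ginv G c))"
      using c cocycle_mem[of g c] uinv_mem[OF subgroup cocycle_ginv_mem]
      by (simp add: A_twist_equivariant[OF f one] A_twist_equivariant[OF h one])
    also have "\<dots> = uinv (\<sigma> (gmul G g c, ginv G c)) * untwist f (gmul G g c) * untwist h (ginv G c)"
      using uinv_cocycle_gmul_ginv[OF c] by (simp add: algebra_simps)
    finally show ?thesis by simp
  qed
  have "untwist (conv_twist G T \<sigma> f h) g
      = finsum (\<lambda>c. f (tw_mul G \<sigma> (g, 1) (c, 1)) * h (tw_inv G \<sigma> (c, 1))) {c. rng G c = src G g}"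
    using one by (simp add: untwist_def conv_twist_def)
  also have "\<dots> = conv_cocycle G (\<lambda>p. uinv (\<sigma> p)) (untwist f) (untwist h) g"
    unfolding conv_cocycle_def
    by (rule finsum_reindex_bij_betw[OF bij_betw_factorizations]) (simp add: summand)
  finally show "untwist (conv_twist G T \<sigma> f h) g = conv_cocycle G (\<lambda>p. uinv (\<sigma> p)) (untwist f) (untwist h) g" .
qed

lemma untwist_star_twist:
  assumes bar: "T_inverse_involution T bar" and f: "f \<in> A_twist G T"
  shows "untwist (star_twist G T \<sigma> bar f) = star_cocycle G (\<lambda>p. uinv (\<sigma> p)) bar (untwist f)"
proof
  fix g
  let ?v = "\<sigma> (g, ginv G g)"
  have bar_mult: "bar (a * b) = bar b * bar a" for a b
    using bar unfolding T_inverse_involution_def by blast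
  have bar_T: "bar z = uinv z" if "z \<in> T" for z
    using bar that unfolding T_inverse_involution_def by blast
  note one = subgroup_of_units_one[OF subgroup]
  have v: "?v \<in> T" by (rule cocycle_ginv_mem)
  have "untwist (star_twist G T \<sigma> bar f) g = bar (f (ginv G g, uinv ?v))"
    using one by (simp add: untwist_def star_twist_def tw_inv_def)
  also have "\<dots> = bar (uinv ?v * untwist f (ginv G g))"
    using A_twist_equivariant[OF f one uinv_mem[OF subgroup v]] by simp
  also have "\<dots> = bar (untwist f (ginv G g)) * ?v"
    using bar_mult bar_T[OF uinv_mem[OF subgroup v]] uinv_uinv[OF subgroup v] by simp
  also have "\<dots> = star_cocycle G (\<lambda>p. uinv (\<sigma> p)) bar (untwist f) g"
    using uinv_uinv[OF subgroup v] by (simp add: star_cocycle_def mult.commute)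
  finally show "untwist (star_twist G T \<sigma> bar f) g = star_cocycle G (\<lambda>p. uinv (\<sigma> p)) bar (untwist f) g" .
qed

end

theorem corollary4p25:
  fixes G :: "('g::t2_space) groupoid"
    and T :: "('r::comm_ring_1) set"
    and \<sigma> :: "'g \<times> 'g \<Rightarrow> 'r"
  assumes "ample_hausdorff_groupoid G"
    and "subgroup_of_units T"
    and "continuous_2_cocycle G T \<sigma>"
  shows "\<exists>\<Psi>. bij_betw \<Psi> (A_twist G T) (A_cocycle G) \<and>
     (\<forall>f\<in>A_twist G T. \<forall>g. \<Psi> f g = f (g, 1)) \<and>
     (\<forall>f\<in>A_twist G T. \<forall>h\<in>A_twist G T.
        \<Psi> (\<lambda>e. f e + h e) = (\<lambda>g. \<Psi> f g + \<Psi> h g) \<and>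
        \<Psi> (conv_twist G T \<sigma> f h) = conv_cocycle G (\<lambda>p. uinv (\<sigma> p)) (\<Psi> f) (\<Psi> h)) \<and>
     (\<forall>c. \<forall>f\<in>A_twist G T. \<Psi> (\<lambda>e. c * f e) = (\<lambda>g. c * \<Psi> f g)) \<and>
     (\<forall>bar. T_inverse_involution T bar \<longrightarrow>
        (\<forall>f\<in>A_twist G T. \<Psi> (star_twist G T \<sigma> bar f) = star_cocycle G (\<lambda>p. uinv (\<sigma> p)) bar (\<Psi> f)))"
proof -
  have "groupoid_axioms G"
    using assms(1) unfolding ample_hausdorff_groupoid_def topological_groupoid_def by blast
  then interpret groupoid_cocycle G T \<sigma>
    using assms(2,3) by (rule continuous_2_cocycle_imp_groupoid_cocycle)
  show ?thesis
    using bij_betw_untwist[OF assms(2)] untwist_conv_twist untwist_star_twist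
    by (intro exI[of _ untwist]) (auto simp: untwist_def)
qed

end
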